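(* Let $N = n+1 \ge 4$ be even. The height function $\omega: S_{C_N} \to \mathbb{Z}$ given by $\omega(\mathbf{0}) = 0$, $\omega(\pm \mathbf{e}_1) = 2$, and $\omega(\mathbf{a}) = 1$ for all other $\mathbf{a}\in S_{C_N}$ induces a regular unimodular triangulation $\Delta_N$ of the point configuration $S_{C_N}$ (whose convex hull is $P_{C_N}$). Specifically, \[ \Delta_N = \bigcup_{\boldsymbol{\lambda} \in \Lambda_N} \Delta_+(G^{\mathbf{0}}_{\boldsymbol{\lambda}}). \]
   Context: $\mathbf{e}_1,\dots,\mathbf{e}_n$ is the standard basis of $\mathbb{R}^n$, with the convention $\mathbf{e}_0 = \mathbf{e}_N = \mathbf{0}$. The cycle graph $C_N$ has vertices $0,\dots,N-1$ and edges $\{0,1\},\dots,\{N-2,N-1\},\{N-1,0\}$. The adjacency polytope is $P_{C_N} = \operatorname{conv}\{\mathbf{e}_i - \mathbf{e}_j \mid \{i,j\} \text{ an edge of } C_N\}$ (both orientations), and $S_{C_N} = \{\mathbf{0}\}\cup\{\mathbf{e}_i - \mathbf{e}_j \mid \{i,j\} \text{ an edge}\}$. For even $N$, $\Lambda_N = \{(\lambda_1,\dots,\lambda_N)\in\{-1,1\}^N \mid \sum_i\lambda_i = 0\}$. For $\boldsymbol{\lambda}\in\Lambda_N$, set $\mathbf{v}_0=\mathbf{0}$, $\mathbf{v}_i = \lambda_i(\mathbf{e}_{i-1}-\mathbf{e}_i)$ ($1\le i\le N$), $V_N = \{\mathbf{v}_0,\dots,\mathbf{v}_N\}$, $G^{\mathbf{0}}_{\boldsymbol{\lambda}}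 = \operatorname{conv}V_N$, and $\Delta_+(G^{\mathbf{0}}_{\boldsymbol{\lambda}}) = \{\operatorname{conv}(V_N\setminus\{\mathbf{v}_i\}) \mid 1\le i\le N,\ \lambda_i = \lambda_1\}$. The regular subdivision induced by $\omega$ is the set of projections to $\mathbb{R}^n$ of the lower facets (facets with inner normal having positive last coordinate) of $\operatorname{conv}\{(\mathbf{a},\omega(\mathbf{a})) \mid \mathbf{a}\in S_{C_N}\}$. A triangulation is unimodular if every simplex is a lattice simplex of normalized volume $1$ (i.e., $n!$ times its Euclidean volume equals $1$), and it is a triangulation of the point configuration $S_{C_N}$ if all simplices have vertices in $S_{C_N}$. *)

theory Defs
  imports "HOL-Analysis.Analysis"
begin

text \<open>Coordinates of R^n are indexed by a finite type 'n with an enumeration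
  ix : {1..n} -> 'n; e_i = axis (ix i) 1 for 1 <= i <= n = N-1, and e_0 = e_N = 0.\<close>

definition ebasis :: "(nat \<Rightarrow> 'n::finite) \<Rightarrow> nat \<Rightarrow> nat \<Rightarrow> real^'n" where
  "ebasis ix N i = (if 1 \<le> i \<and> i < N then axis (ix i) 1 else 0)"

definition cycle_edges :: "nat \<Rightarrow> nat set set" where
  "cycle_edges N = {{i, Suc i} | i. i < N - 1} \<union> {{N - 1, 0}}"

definition S_C :: "(nat \<Rightarrow> 'n::finite) \<Rightarrow> nat \<Rightarrow> (real^'n) set" where
  "S_C ix N = {0} \<union> {ebasis ix N i - ebasis ix N j | i j. {i, j} \<in> cycle_edges N}"

definition P_C :: "(nat \<Rightarrow> 'n::finite) \<Rightarrow> nat \<Rightarrow> (real^'n) set" where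
  "P_C ix N = convex hull {ebasis ix N i - ebasis ix N j | i j. {i, j} \<in> cycle_edges N}"

definition Lambda :: "nat \<Rightarrow> (nat \<Rightarrow> int) set" where
  "Lambda N = {l. (\<forall>i\<in>{1..N}. l i \<in> {-1, 1}) \<and> (\<forall>i. i \<notin> {1..N} \<longrightarrow> l i = 0)
                 \<and> (\<Sum>i=1..N. l i) = 0}"

definition vv :: "(nat \<Rightarrow> 'n::finite) \<Rightarrow> nat \<Rightarrow> (nat \<Rightarrow> int) \<Rightarrow> nat \<Rightarrow> real^'n" where
  "vv ix N l i = (if i = 0 then 0 else of_int (l i) *\<^sub>R (ebasis ix N (i - 1) - ebasis ix N i))"

definition VV :: "(nat \<Rightarrow> 'n::finite) \<Rightarrow> nat \<Rightarrow> (nat \<Rightarrow> int) \<Rightarrow> (real^'n) set" where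
  "VV ix N l = vv ix N l ` {0..N}"

definition G0 :: "(nat \<Rightarrow> 'n::finite) \<Rightarrow> nat \<Rightarrow> (nat \<Rightarrow> int) \<Rightarrow> (real^'n) set" where
  "G0 ix N l = convex hull (VV ix N l)"

definition Delta_plus :: "(nat \<Rightarrow> 'n::finite) \<Rightarrow> nat \<Rightarrow> (nat \<Rightarrow> int) \<Rightarrow> (real^'n) set set" where
  "Delta_plus ix N l = {convex hull (VV ix N l - {vv ix N l i}) | i. 1 \<le> i \<and> i \<le> N \<and> l i = l 1}"

text \<open>Regular subdivision of a point configuration S induced by height function w:
  projections of the lower facets (inner normal with positive last coordinate)
  of conv{(a, w a) | a in S}.\<close>
definition lifted :: "('a::euclidean_space) set \<Rightarrow> ('a \<Rightarrow> real) \<Rightarrow> ('a \<times> real) set" where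
  "lifted S w = convex hull ((\<lambda>a. (a, w a)) ` S)"

definition lower_facet_of :: "('a::euclidean_space \<times> real) set \<Rightarrow> ('a \<times> real) set \<Rightarrow> bool" where
  "lower_facet_of F Q \<longleftrightarrow> F facet_of Q \<and>
     (\<exists>c d. snd c > 0 \<and> Q \<subseteq> {x. c \<bullet> x \<ge> d} \<and> F = Q \<inter> {x. c \<bullet> x = d})"

definition regular_subdivision :: "('a::euclidean_space) set \<Rightarrow> ('a \<Rightarrow> real) \<Rightarrow> 'a set set" where
  "regular_subdivision S w = {fst ` F | F. lower_facet_of F (lifted S w)}"

definition lattice_point :: "real^'n \<Rightarrow> bool" where
  "lattice_point x \<longleftrightarrow> (\<forall>i. x $ i \<in> \<int>)"

definition unimodular_triangulation_of :: "(real^'n) set \<Rightarrow> (real^'n) set set \<Rightarrow> bool" where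
  "unimodular_triangulation_of S T \<longleftrightarrow>
     finite T \<and> \<Union>T = convex hull S \<and>
     (\<forall>C\<in>T. \<exists>V. V \<subseteq> S \<and> \<not> affine_dependent V \<and> card V = CARD('n) + 1 \<and>
                 C = convex hull V \<and> (\<forall>v\<in>V. lattice_point v) \<and>
                 fact CARD('n) * measure lebesgue C = 1) \<and>
     (\<forall>C1\<in>T. \<forall>C2\<in>T. (C1 \<inter> C2) face_of C1 \<and> (C1 \<inter> C2) face_of C2)"

definition omega :: "(nat \<Rightarrow> 'n::finite) \<Rightarrow> nat \<Rightarrow> real^'n \<Rightarrow> real" where
  "omega ix N a = (if a = 0 then 0
                   else if a = ebasis ix N 1 \<or> a = - ebasis ix N 1 then 2 else 1)"

end

theory Submission
  imports Defs
begin

text \<open>Write \<open>u\<^sub>j = e\<^sub>j\<^sub>-\<^sub>1 - e\<^sub>j\<close>, so that \<open>S\<^sub>C\<^sub>N = {0} \<union> {\<plusminus>u\<^sub>j}\<close> with \<open>\<omega>(\<plusminus>u\<^sub>1) = 2\<close> and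
  \<open>\<omega>(\<plusminus>u\<^sub>j) = 1\<close> otherwise. A lower face of the lifted configuration is cut out by an affine
  function \<open>g + c\<cdot>x\<close> below \<open>\<omega>\<close> on \<open>S\<^sub>C\<^sub>N\<close>. The numbers \<open>\<alpha>\<^sub>j = c\<cdot>u\<^sub>j\<close> satisfy \<open>\<Sum>\<alpha>\<^sub>j = 0\<close> and
  \<open>|\<alpha>\<^sub>j| \<le> \<omega>(u\<^sub>j) - g\<close>, and \<open>\<plusminus>u\<^sub>j\<close> lies on the face only if this bound is tight. A facet needs
  \<open>N\<close> affinely independent contact points; since \<open>N\<close> is even, a parity count of the signs shows
  that this forces \<open>g = 0\<close> and exactly one non-tight index \<open>i\<close>, and the signs of the tight \<open>\<alpha>\<^sub>j\<close>
  form some \<open>\<lambda> \<in> \<Lambda>\<^sub>N\<close> with \<open>\<lambda>\<^sub>i = \<lambda>\<^sub>1\<close>. Conversely every such \<open>(\<lambda>, i)\<close> has a supporting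
  functional, so the lower facets are exactly the simplices \<open>conv(V\<^sub>N - {v\<^sub>i})\<close>. Each of them is
  unimodular because the vectors \<open>\<lambda>\<^sub>j u\<^sub>j\<close>, \<open>j \<noteq> i\<close>, have an integral dual basis, and two cells of
  a regular subdivision always meet in a common face.\<close>

section \<open>Lower facets of lifted point configurations\<close>

abbreviation lift :: "('a \<Rightarrow> real) \<Rightarrow> 'a \<Rightarrow> 'a \<times> real" where
  "lift w \<equiv> \<lambda>a. (a, w a)"

definition contact :: "'a::real_inner set \<Rightarrow> ('a \<Rightarrow> real) \<Rightarrow> real \<Rightarrow> 'a \<Rightarrow> 'a set" where
  "contact S w g c = {p\<in>S. g + c \<bullet> p = w p}"

lemma convex_hull_Int_supporting_hyperplane:
  fixes L :: "'a::euclidean_space set"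
  assumes "finite L" and "\<forall>p\<in>L. a \<bullet> p \<ge> d"
  shows "convex hull L \<inter> {x. a \<bullet> x = d} = convex hull {p\<in>L. a \<bullet> p = d}"
proof
  have "convex hull L \<subseteq> {x. a \<bullet> x \<ge> d}"
    using assms(2) by (intro hull_minimal) (auto simp: convex_halfspace_ge)
  then have "(convex hull L \<inter> {x. a \<bullet> x = d}) face_of convex hull L"
    by (intro face_of_Int_supporting_hyperplane_ge) auto
  then obtain L' where L': "L' \<subseteq> L" "convex hull L \<inter> {x. a \<bullet> x = d} = convex hull L'"
    using face_of_convex_hull_subset finite_imp_compact assms(1) by metis
  then have "L' \<subseteq> {p\<in>L. a \<bullet> p = d}"
    using hull_subset[of L' convex] by auto
  then show "convex hull L \<inter> {x. a \<bullet> x = d} \<subseteq> convex hull {p\<in>L. a \<bullet> p = d}"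
    using L'(2) hull_mono by metis
  show "convex hull {p\<in>L. a \<bullet> p = d} \<subseteq> convex hull L \<inter> {x. a \<bullet> x = d}"
    by (intro hull_minimal) (auto intro: hull_inc simp: convex_Int convex_hyperplane)
qed

lemma lifted_subset_halfspace:
  assumes "\<forall>p\<in>S. g + c \<bullet> p \<le> w p"
  shows "lifted S w \<subseteq> {y. (-c, 1) \<bullet> y \<ge> g}"
  unfolding lifted_def using assms
  by (intro hull_minimal) (auto simp: convex_halfspace_ge algebra_simps)

lemma lifted_Int_lower_hyperplane:
  fixes S :: "'a::euclidean_space set"
  assumes "finite S" and "\<forall>p\<in>S. g + c \<bullet> p \<le> w p"
  shows "lifted S w \<inter> {y. (-c, 1) \<bullet> y = g} = convex hull (lift w ` contact S w g c)"
proof -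
  have "{y \<in> lift w ` S. (-c, 1) \<bullet> y = g} = lift w ` contact S w g c"
    by (auto simp: contact_def algebra_simps)
  moreover have "\<forall>y\<in>lift w ` S. (-c, 1) \<bullet> y \<ge> g"
    using assms(2) by (auto simp: algebra_simps)
  ultimately show ?thesis
    unfolding lifted_def using assms(1) by (simp add: convex_hull_Int_supporting_hyperplane)
qed

lemma lift_contact_eq:
  "lift w ` contact S w g c = (+) (0, g) ` (\<lambda>y. (y, c \<bullet> y)) ` contact S w g c"
  by (force simp: contact_def image_iff)

lemma linear_graph_inner: "linear (\<lambda>y. (y, c \<bullet> y))"
  by (simp add: linear_iff inner_add_right)

lemma aff_dim_lift_contact:
  fixes S :: "'a::euclidean_space set"
  shows "aff_dim (lift w ` contact S w g c) = aff_dim (contact S w g c)"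
  unfolding lift_contact_eq aff_dim_translation_eq
  by (rule aff_dim_injective_linear_image[OF linear_graph_inner]) (auto simp: inj_on_def)

lemma convex_hull_lift_contact:
  fixes S :: "'a::euclidean_space set"
  shows "convex hull (lift w ` contact S w g c)
    = (\<lambda>y. (y, g + c \<bullet> y)) ` (convex hull (contact S w g c))"
  unfolding lift_contact_eq convex_hull_translation[unfolded image_image]
    convex_hull_linear_image[OF linear_graph_inner, symmetric]
  by (simp add: image_image)

lemma fst_convex_hull_lift: "fst ` (convex hull (lift w ` A)) = convex hull A"
  using convex_hull_linear_image[OF linear_fst, of "lift w ` A"] by (simp add: image_image)

lemma fst_lifted: "fst ` lifted S w = convex hull S"
  unfolding lifted_def by (rule fst_convex_hull_lift)

lemma lower_facet_of_lifted:
  fixes S :: "'a::euclidean_space set"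
  assumes "finite S" and below: "\<forall>p\<in>S. g + c \<bullet> p \<le> w p"
    and dim_Q: "aff_dim (lifted S w) = int DIM('a) + 1"
    and dim_contact: "aff_dim (contact S w g c) = int DIM('a)"
  shows "lower_facet_of (convex hull (lift w ` contact S w g c)) (lifted S w)"
proof -
  let ?F = "convex hull (lift w ` contact S w g c)"
  have F: "?F = lifted S w \<inter> {y. (-c, 1) \<bullet> y = g}"
    using lifted_Int_lower_hyperplane[OF assms(1,2)] by simp
  have halfspace: "lifted S w \<subseteq> {y. (-c, 1) \<bullet> y \<ge> g}"
    using lifted_subset_halfspace[OF below] .
  have "?F face_of lifted S w"
    unfolding F using halfspace
    by (intro face_of_Int_supporting_hyperplane_ge) (auto simp: lifted_def)
  moreover have "aff_dim ?F = aff_dim (lifted S w) - 1"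
    by (simp add: aff_dim_convex_hull aff_dim_lift_contact dim_Q dim_contact)
  moreover have "?F \<noteq> {}"
    using dim_contact by (auto simp: aff_dim_lift_contact)
  ultimately show ?thesis
    unfolding lower_facet_of_def facet_of_def using F halfspace
    by (intro conjI exI[of _ "(-c, 1)"] exI[of _ g]) auto
qed

lemma lower_facet_of_liftedE:
  fixes S :: "'a::euclidean_space set"
  assumes "finite S" and "lower_facet_of F (lifted S w)"
  obtains g c where "\<forall>p\<in>S. g + c \<bullet> p \<le> w p"
    and "F = convex hull (lift w ` contact S w g c)"
    and "aff_dim (contact S w g c) = aff_dim (lifted S w) - 1"
proof -
  obtain a b d where facet: "F facet_of lifted S w" and "b > 0"
    and halfspace: "lifted S w \<subseteq> {y. (a, b) \<bullet> y \<ge> d}"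
    and F: "F = lifted S w \<inter> {y. (a, b) \<bullet> y = d}"
    using assms(2) unfolding lower_facet_of_def by force
  define g where "g = d / b"
  define c where "c = - (1 / b) *\<^sub>R a"
  have normal: "(a, b) \<bullet> y = b * ((-c, 1) \<bullet> y)" for y
    using \<open>b > 0\<close> by (cases y) (simp add: c_def algebra_simps)
  have below: "\<forall>p\<in>S. g + c \<bullet> p \<le> w p"
  proof
    fix p assume "p \<in> S"
    then have "(p, w p) \<in> lifted S w" by (simp add: lifted_def hull_inc)
    then have "d \<le> b * (w p - c \<bullet> p)" using halfspace normal by force
    then show "g + c \<bullet> p \<le> w p" using \<open>b > 0\<close> by (simp add: g_def field_simps)
  qed
  have "F = lifted S w \<inter> {y. (-c, 1) \<bullet> y = g}"
    unfolding F normal using \<open>b > 0\<close> by (auto simp: g_def field_simps)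
  then have F_hull: "F = convex hull (lift w ` contact S w g c)"
    using lifted_Int_lower_hyperplane[OF assms(1) below] by simp
  moreover have "aff_dim (contact S w g c) = aff_dim (lifted S w) - 1"
    using facet unfolding facet_of_def F_hull by (simp add: aff_dim_convex_hull aff_dim_lift_contact)
  ultimately show ?thesis using below that by blast
qed

lemma finite_regular_subdivision:
  fixes S :: "'a::euclidean_space set"
  assumes "finite S"
  shows "finite (regular_subdivision S w)"
proof -
  have "polytope (lifted S w)"
    using assms by (auto simp: lifted_def polytope_def)
  moreover have "regular_subdivision S w \<subseteq> (\<lambda>F. fst ` F) ` {F. F face_of lifted S w}"
    unfolding regular_subdivision_def lower_facet_of_def using facet_of_imp_face_of by blast
  ultimately show ?thesis
    by (metis finite_polytope_faces finite_imageI finite_subset)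
qed

lemma lowest_point_in_lower_facet:
  fixes Q :: "('a::euclidean_space \<times> real) set"
  assumes "polytope Q" and "affine hull Q = UNIV"
    and "(x, t) \<in> Q" and lowest: "\<And>s. s < t \<Longrightarrow> (x, s) \<notin> Q"
  obtains F where "lower_facet_of F Q" and "(x, t) \<in> F"
proof -
  obtain Fs where "finite Fs" and Q_Int: "Q = affine hull Q \<inter> \<Inter>Fs"
    and "\<forall>h\<in>Fs. \<exists>a b. a \<noteq> 0 \<and> h = {y. a \<bullet> y \<le> b}"
    and minimal: "\<forall>Fs'. Fs' \<subset> Fs \<longrightarrow> Q \<subset> affine hull Q \<inter> \<Inter>Fs'"
    using polytope_imp_polyhedron[OF assms(1)] unfolding polyhedron_Int_affine_minimal by blast
  then obtain A B where AB: "\<And>h. h \<in> Fs \<Longrightarrow> A h \<noteq> 0 \<and> h = {y. A h \<bullet> y \<le> B h}"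
    by metis
  have Q: "y \<in> Q \<longleftrightarrow> (\<forall>h\<in>Fs. A h \<bullet> y \<le> B h)" for y
    using Q_Int assms(2) AB by auto
  have shift: "A h \<bullet> (x, t - \<epsilon>) = A h \<bullet> (x, t) - \<epsilon> * snd (A h)" for h \<epsilon>
    by (cases "A h") (simp add: algebra_simps)
  txt \<open>Otherwise the facet inequalities tight at \<open>(x, t)\<close> survive moving the point down, and the
    others survive a small move, contradicting the minimality of \<open>t\<close>.\<close>
  have "\<exists>h\<in>Fs. snd (A h) < 0 \<and> A h \<bullet> (x, t) = B h"
  proof (rule ccontr)
    assume no_lower: "\<not> ?thesis"
    have "eventually (\<lambda>\<epsilon>. A h \<bullet> (x, t - \<epsilon>) \<le> B h) (at_right 0)" if h: "h \<in> Fs" for h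
    proof (cases "snd (A h) < 0")
      case True
      have "A h \<bullet> (x, t) \<le> B h" using assms(3) h Q by blast
      with True no_lower h have "A h \<bullet> (x, t) < B h" by auto
      moreover have "((\<lambda>\<epsilon>. A h \<bullet> (x, t - \<epsilon>)) \<longlongrightarrow> A h \<bullet> (x, t)) (at_right 0)"
        unfolding shift by (auto intro!: tendsto_eq_intros)
      ultimately have "eventually (\<lambda>\<epsilon>. A h \<bullet> (x, t - \<epsilon>) < B h) (at_right 0)"
        by (simp add: order_tendstoD(2))
      then show ?thesis by (rule eventually_mono) simp
    next
      case False
      have "A h \<bullet> (x, t) \<le> B h" using assms(3) h Q by blast
      with False show ?thesis
        unfolding shift
        by (intro eventually_mono[OF eventually_at_right_less]) (smt (verit) mult_nonneg_nonneg)
    qed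
    then have "eventually (\<lambda>\<epsilon>. \<epsilon> > 0 \<and> (\<forall>h\<in>Fs. A h \<bullet> (x, t - \<epsilon>) \<le> B h)) (at_right 0)"
      by (intro eventually_conj eventually_at_right_less eventually_ball_finite[OF \<open>finite Fs\<close>]) blast
    then obtain \<epsilon> :: real where "\<epsilon> > 0" "\<forall>h\<in>Fs. A h \<bullet> (x, t - \<epsilon>) \<le> B h"
      using eventually_happens' trivial_limit_at_right_real by blast
    then show False using lowest[of "t - \<epsilon>"] Q by simp
  qed
  then obtain h where h: "h \<in> Fs" "snd (A h) < 0" "A h \<bullet> (x, t) = B h" by blast
  define F where "F = Q \<inter> {y. A h \<bullet> y = B h}"
  have "F facet_of Q"
    unfolding F_def using h(1) minimal
    by (intro facet_of_polyhedron_explicit[OF \<open>finite Fs\<close> Q_Int AB, THEN iffD2]) auto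
  moreover have "Q \<subseteq> {y. (- A h) \<bullet> y \<ge> - B h}"
    using Q h(1) by auto
  moreover have "F = Q \<inter> {y. (- A h) \<bullet> y = - B h}"
    by (auto simp: F_def)
  ultimately have "lower_facet_of F Q"
    unfolding lower_facet_of_def using h(2) by (metis snd_uminus neg_0_less_iff_less)
  moreover have "(x, t) \<in> F" using assms(3) h(3) by (simp add: F_def)
  ultimately show ?thesis using that by blast
qed

lemma regular_subdivision_subset:
  assumes "C \<in> regular_subdivision S w"
  shows "C \<subseteq> convex hull S"
proof -
  obtain F where "F facet_of lifted S w" "C = fst ` F"
    using assms unfolding regular_subdivision_def lower_facet_of_def by blast
  then show ?thesis
    using fst_lifted[of S w] facet_of_imp_subset image_mono by metis
qed

lemma compact_lowest_point:
  fixes Q :: "('a::euclidean_space \<times> real) set"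
  assumes "compact Q" and "x \<in> fst ` Q"
  obtains t where "(x, t) \<in> Q" and "\<And>s. s < t \<Longrightarrow> (x, s) \<notin> Q"
proof -
  define K where "K = snd ` (Q \<inter> {y. fst y = x})"
  have "{y :: 'a \<times> real. fst y = x} = {x} \<times> UNIV" by auto
  then have "compact K"
    unfolding K_def using assms(1)
    by (intro compact_continuous_image compact_Int_closed continuous_intros) (simp_all add: closed_Times)
  moreover have "K \<noteq> {}" using assms(2) unfolding K_def by blast
  ultimately obtain t where "t \<in> K" and t_min: "\<forall>s\<in>K. t \<le> s"
    using compact_attains_inf by blast
  then obtain y where "y \<in> Q" "fst y = x" "snd y = t"
    unfolding K_def by blast
  then have "(x, t) \<in> Q" by (metis prod.collapse)
  moreover have "(x, s) \<notin> Q" if "s < t" for s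
  proof
    assume "(x, s) \<in> Q"
    then have "s \<in> K" unfolding K_def by (intro image_eqI[of _ _ "(x, s)"]) auto
    then show False using t_min \<open>s < t\<close> by auto
  qed
  ultimately show ?thesis using that by blast
qed

lemma Union_regular_subdivision:
  fixes S :: "'a::euclidean_space set"
  assumes "finite S" and full: "aff_dim (lifted S w) = int DIM('a) + 1"
  shows "\<Union>(regular_subdivision S w) = convex hull S"
proof
  show "\<Union>(regular_subdivision S w) \<subseteq> convex hull S"
    using regular_subdivision_subset by blast
next
  show "convex hull S \<subseteq> \<Union>(regular_subdivision S w)"
  proof
    fix x assume "x \<in> convex hull S"
    have "polytope (lifted S w)"
      unfolding lifted_def polytope_def using assms(1) by blast
    moreover obtain t where "(x, t) \<in> lifted S w" and "\<And>s. s < t \<Longrightarrow> (x, s) \<notin> lifted S w"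
      using compact_lowest_point[OF polytope_imp_compact[OF \<open>polytope (lifted S w)\<close>]]
        \<open>x \<in> convex hull S\<close> fst_lifted[of S w] by metis
    moreover have "affine hull (lifted S w) = UNIV"
      using full aff_dim_eq_full[of "lifted S w"] by simp
    ultimately obtain F where "lower_facet_of F (lifted S w)" and "(x, t) \<in> F"
      using lowest_point_in_lower_facet by blast
    then have "fst ` F \<in> regular_subdivision S w" and "x \<in> fst ` F"
      unfolding regular_subdivision_def by (blast, metis fst_conv image_eqI)
    then show "x \<in> \<Union>(regular_subdivision S w)" by blast
  qed
qed

lemma convex_hull_contact_Int:
  fixes S :: "'a::euclidean_space set"
  assumes "finite S"
    and below1: "\<forall>p\<in>S. g1 + c1 \<bullet> p \<le> w p" and below2: "\<forall>p\<in>S. g2 + c2 \<bullet> p \<le> w p"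
  shows "convex hull (contact S w g1 c1) \<inter> convex hull (contact S w g2 c2)
    = convex hull (contact S w g1 c1 \<inter> contact S w g2 c2)"
proof
  show "convex hull (contact S w g1 c1 \<inter> contact S w g2 c2)
    \<subseteq> convex hull (contact S w g1 c1) \<inter> convex hull (contact S w g2 c2)"
    by (simp add: hull_mono)
next
  let ?E1 = "contact S w g1 c1" and ?E2 = "contact S w g2 c2"
  show "convex hull ?E1 \<inter> convex hull ?E2 \<subseteq> convex hull (?E1 \<inter> ?E2)"
  proof
    fix x assume x: "x \<in> convex hull ?E1 \<inter> convex hull ?E2"
    have on_cell: "(x, g + c \<bullet> x) \<in> convex hull (lift w ` contact S w g c)"
      if "x \<in> convex hull (contact S w g c)" for g c
      using that unfolding convex_hull_lift_contact by blast
    have in_lifted: "convex hull (lift w ` contact S w g c) \<subseteq> lifted S w" for g c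
      unfolding lifted_def by (intro hull_mono) (auto simp: contact_def)
    have "g1 + c1 \<bullet> x \<le> g2 + c2 \<bullet> x"
      using lifted_subset_halfspace[OF below1] in_lifted on_cell[of g2 c2] x by force
    moreover have "g2 + c2 \<bullet> x \<le> g1 + c1 \<bullet> x"
      using lifted_subset_halfspace[OF below2] in_lifted on_cell[of g1 c1] x by force
    ultimately have "(x, g2 + c2 \<bullet> x) \<in> convex hull (lift w ` ?E2) \<inter> {y. (-c1, 1) \<bullet> y = g1}"
      using on_cell[of g2 c2] x by auto
    also have "\<dots> = convex hull {y \<in> lift w ` ?E2. (-c1, 1) \<bullet> y = g1}"
      using assms(1) below1
      by (intro convex_hull_Int_supporting_hyperplane) (auto simp: contact_def algebra_simps)
    also have "{y \<in> lift w ` ?E2. (-c1, 1) \<bullet> y = g1} = lift w ` (?E1 \<inter> ?E2)"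
      by (auto simp: contact_def algebra_simps)
    finally show "x \<in> convex hull (?E1 \<inter> ?E2)"
      using fst_convex_hull_lift[of w "?E1 \<inter> ?E2"] by force
  qed
qed

lemma aff_dim_lifted_eq_full:
  fixes S :: "'a::euclidean_space set"
  assumes below: "\<forall>p\<in>S. g + c \<bullet> p \<le> w p" and dim: "aff_dim (contact S w g c) = int DIM('a)"
    and "p \<in> S" and "p \<notin> contact S w g c"
  shows "aff_dim (lifted S w) = int DIM('a) + 1"
proof (rule antisym)
  show "aff_dim (lifted S w) \<le> int DIM('a) + 1"
    using aff_dim_le_DIM[of "lifted S w"] by simp
  let ?G = "lift w ` contact S w g c"
  have "affine hull ?G \<subseteq> {y. (-c, 1) \<bullet> y = g}"
    by (intro hull_minimal) (auto simp: contact_def affine_hyperplane algebra_simps)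
  moreover have "(-c, 1) \<bullet> (p, w p) \<noteq> g"
    using assms(3,4) by (auto simp: contact_def algebra_simps)
  ultimately have "aff_dim (insert (p, w p) ?G) = int DIM('a) + 1"
    using dim by (auto simp: aff_dim_insert aff_dim_lift_contact)
  moreover have "insert (p, w p) ?G \<subseteq> lifted S w"
    using assms(3) by (auto simp: lifted_def contact_def intro: hull_inc)
  ultimately show "int DIM('a) + 1 \<le> aff_dim (lifted S w)"
    by (metis aff_dim_subset)
qed

section \<open>Volume of unimodular lattice simplices\<close>

text \<open>\<open>content_simplex\<close> needs a well-ordered index type; a copy of an arbitrary finite type,
  ordered through \<open>to_nat\<close>, lets us transfer it.\<close>
typedef 'a well_ordered = "UNIV :: 'a set" by simp

lemma bij_Rep_well_ordered: "bij Rep_well_ordered"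
  unfolding bij_def inj_def
  using Rep_well_ordered_inject type_definition.Rep_range[OF type_definition_well_ordered] by auto

instance well_ordered :: (finite) finite
  by standard (simp add: bij_betw_finite[OF bij_Rep_well_ordered])

instantiation well_ordered :: (finite) wellorder
begin

definition less_eq_well_ordered :: "'a well_ordered \<Rightarrow> 'a well_ordered \<Rightarrow> bool" where
  "x \<le> y \<longleftrightarrow> to_nat (Rep_well_ordered x) \<le> to_nat (Rep_well_ordered y)"

definition less_well_ordered :: "'a well_ordered \<Rightarrow> 'a well_ordered \<Rightarrow> bool" where
  "x < y \<longleftrightarrow> to_nat (Rep_well_ordered x) < to_nat (Rep_well_ordered y)"

instance
proof
  fix P :: "'a well_ordered \<Rightarrow> bool" and a :: "'a well_ordered"
  assume step: "\<And>x. (\<And>y. y < x \<Longrightarrow> P y) \<Longrightarrow> P x"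
  show "P a"
    by (induction "to_nat (Rep_well_ordered a)" arbitrary: a rule: less_induct)
      (use step in \<open>auto simp: less_well_ordered_def\<close>)
qed (auto simp: less_eq_well_ordered_def less_well_ordered_def Rep_well_ordered_inject)

end

lemma card_well_ordered: "CARD('a::finite well_ordered) = CARD('a)"
  by (rule bij_betw_same_card[OF bij_Rep_well_ordered])

definition vec_to_wo :: "real^'n \<Rightarrow> real^'n well_ordered" where
  "vec_to_wo x = (\<chi> j. x $ Rep_well_ordered j)"

definition vec_of_wo :: "real^'n well_ordered \<Rightarrow> real^'n" where
  "vec_of_wo y = (\<chi> i. y $ Abs_well_ordered i)"

lemma vec_of_wo_to_wo [simp]: "vec_of_wo (vec_to_wo x) = x"
  by (simp add: vec_to_wo_def vec_of_wo_def Abs_well_ordered_inverse vec_eq_iff)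

lemma vec_to_wo_of_wo [simp]: "vec_to_wo (vec_of_wo y) = y"
  by (simp add: vec_to_wo_def vec_of_wo_def Rep_well_ordered_inverse vec_eq_iff)

lemma linear_vec_to_wo: "linear vec_to_wo"
  by (simp add: linear_iff vec_to_wo_def vec_eq_iff)

lemma linear_vec_of_wo: "linear vec_of_wo"
  by (simp add: linear_iff vec_of_wo_def vec_eq_iff)

lemma borel_measurable_vec_of_wo: "vec_of_wo \<in> borel_measurable borel"
  by (intro borel_measurable_continuous_onI linear_continuous_on
      linear_conv_bounded_linear[THEN iffD1] linear_vec_of_wo)

lemma inj_vec_to_wo: "inj vec_to_wo"
  by (metis injI vec_of_wo_to_wo)

lemma inner_vec_to_wo [simp]: "vec_to_wo x \<bullet> vec_to_wo y = x \<bullet> y"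
  using sum.reindex_bij_betw[OF bij_Rep_well_ordered, of "\<lambda>i. x $ i * y $ i"]
  by (simp add: inner_vec_def vec_to_wo_def)

lemma all_well_ordered: "(\<forall>j. P (Rep_well_ordered j)) \<longleftrightarrow> (\<forall>i. P i)"
  by (metis Abs_well_ordered_inverse UNIV_I)

lemma lattice_point_vec_to_wo [simp]: "lattice_point (vec_to_wo x) \<longleftrightarrow> lattice_point x"
  using all_well_ordered[of "\<lambda>i. x $ i \<in> \<int>"] by (simp add: lattice_point_def vec_to_wo_def)

lemma prod_Basis_vec: "(\<Prod>b\<in>(Basis :: (real^'m) set). g b) = (\<Prod>i\<in>UNIV. g (axis i 1))"
proof -
  have "(Basis :: (real^'m) set) = (\<lambda>i. axis i 1) ` UNIV"
    unfolding Basis_vec_def by auto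
  then have "(\<Prod>b\<in>(Basis :: (real^'m) set). g b) = prod g ((\<lambda>i. axis i 1) ` UNIV)" by simp
  also have "\<dots> = prod (g \<circ> (\<lambda>i. axis i 1)) UNIV"
    by (rule prod.reindex) (auto simp: inj_on_def axis_eq_axis)
  finally show ?thesis by simp
qed

lemma distr_vec_of_wo_lborel: "distr lborel borel vec_of_wo = (lborel :: (real^'n::finite) measure)"
proof (rule lborel_eqI[symmetric])
  fix l u :: "real^'n" assume le: "\<And>b. b \<in> Basis \<Longrightarrow> l \<bullet> b \<le> u \<bullet> b"
  have preimage: "vec_of_wo -` box l u = box (vec_to_wo l) (vec_to_wo u)"
    by (rule set_eqI)
      (simp add: mem_box_cart vec_of_wo_def vec_to_wo_def
        all_well_ordered[where P = "\<lambda>i. l $ i < _ $ Abs_well_ordered i \<and> _ $ Abs_well_ordered i < u $ i", symmetric]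
        Rep_well_ordered_inverse)
  have le': "vec_to_wo l \<bullet> b \<le> vec_to_wo u \<bullet> b" if b: "b \<in> Basis" for b
  proof -
    obtain j where j: "b = axis j 1" using b unfolding Basis_vec_def by auto
    have "l \<bullet> axis (Rep_well_ordered j) 1 \<le> u \<bullet> axis (Rep_well_ordered j) 1"
      by (rule le) (auto simp: Basis_vec_def)
    then show ?thesis using j by (simp add: inner_axis vec_to_wo_def)
  qed
  have "emeasure (distr lborel borel vec_of_wo) (box l u)
      = emeasure lborel (vec_of_wo -` box l u \<inter> space lborel)"
    by (rule emeasure_distr) (use borel_measurable_vec_of_wo in auto)
  also have "\<dots> = (\<Prod>b\<in>Basis. (vec_to_wo u - vec_to_wo l) \<bullet> b)"
    using preimage le' by simp
  also have "\<dots> = (\<Prod>j\<in>UNIV. (u - l) $ Rep_well_ordered j)"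
    by (simp add: prod_Basis_vec inner_axis vec_to_wo_def)
  also have "\<dots> = (\<Prod>b\<in>Basis. (u - l) \<bullet> b)"
    using prod.reindex_bij_betw[OF bij_Rep_well_ordered, of "\<lambda>i. (u - l) $ i"]
    by (simp add: prod_Basis_vec inner_axis)
  finally show "emeasure (distr lborel borel vec_of_wo) (box l u) = (\<Prod>b\<in>Basis. (u - l) \<bullet> b)" .
qed simp

lemma measure_vec_to_wo_image:
  fixes A :: "(real^'n::finite) set"
  assumes "A \<in> sets borel"
  shows "measure lborel (vec_to_wo ` A) = measure lborel A"
proof -
  have measurable: "vec_of_wo \<in> measurable lborel borel"
    using borel_measurable_vec_of_wo by simp
  have preimage: "vec_of_wo -` A = vec_to_wo ` A"
  proof (intro set_eqI iffI)
    fix y assume "y \<in> vec_of_wo -` A"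
    then show "y \<in> vec_to_wo ` A" by (metis vimageE image_eqI vec_to_wo_of_wo)
  qed auto
  have "measure lborel A = measure (distr lborel borel vec_of_wo) A"
    by (simp add: distr_vec_of_wo_lborel)
  also have "\<dots> = measure lborel (vec_of_wo -` A \<inter> space lborel)"
    by (rule measure_distr[OF measurable assms])
  also have "\<dots> = measure lborel (vec_to_wo ` A)"
    using preimage by simp
  finally show ?thesis ..
qed

lemma det_Ints: "(\<And>a b. A $ a $ b \<in> \<int>) \<Longrightarrow> det (A :: real^'m^'m) \<in> \<int>"
  unfolding det_def by (intro Ints_sum Ints_mult Ints_prod Ints_of_int) auto

lemma abs_det_eq_1_if_integral_left_inverse:
  fixes M D :: "real^'m^'m"
  assumes "D ** M = mat 1" and "\<And>a b. D $ a $ b \<in> \<int>" and "\<And>a b. M $ a $ b \<in> \<int>"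
  shows "\<bar>det M\<bar> = 1"
proof -
  obtain p q where "det D = of_int p" "det M = of_int q"
    using det_Ints[of D] det_Ints[of M] assms(2,3) by (metis Ints_cases)
  moreover have "det D * det M = 1"
    by (metis assms(1) det_mul det_I)
  ultimately have "p * q = 1" by (metis of_int_1 of_int_eq_iff of_int_mult)
  then show ?thesis using \<open>det M = of_int q\<close> by (auto simp: zmult_eq_1_iff)
qed

definition has_integral_dual_basis :: "(real^'n) set \<Rightarrow> bool" where
  "has_integral_dual_basis W \<longleftrightarrow>
     (\<forall>w\<in>W. \<exists>d. lattice_point d \<and> d \<bullet> w = 1 \<and> (\<forall>w'\<in>W - {w}. d \<bullet> w' = 0))"

lemma independent_if_integral_dual_basis:
  assumes "has_integral_dual_basis W"
  shows "independent W"
  unfolding dependent_def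
proof
  assume "\<exists>w\<in>W. w \<in> span (W - {w})"
  then obtain w where "w \<in> W" "w \<in> span (W - {w})" by blast
  moreover obtain d where "d \<bullet> w = 1" "\<forall>v\<in>W - {w}. d \<bullet> v = 0"
    using assms \<open>w \<in> W\<close> unfolding has_integral_dual_basis_def by blast
  then have "span (W - {w}) \<subseteq> {x. d \<bullet> x = 0}"
    by (intro span_minimal) (auto simp: subspace_hyperplane)
  ultimately show False using \<open>d \<bullet> w = 1\<close> by auto
qed

lemma has_integral_dual_basis_vec_to_wo:
  assumes "has_integral_dual_basis W"
  shows "has_integral_dual_basis (vec_to_wo ` W)"
  unfolding has_integral_dual_basis_def
proof
  fix w' assume "w' \<in> vec_to_wo ` W"
  then obtain w where "w \<in> W" "w' = vec_to_wo w" by blast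
  then obtain d where "lattice_point d" "d \<bullet> w = 1" "\<forall>v\<in>W - {w}. d \<bullet> v = 0"
    using assms unfolding has_integral_dual_basis_def by blast
  then show "\<exists>d. lattice_point d \<and> d \<bullet> w' = 1 \<and> (\<forall>v\<in>vec_to_wo ` W - {w'}. d \<bullet> v = 0)"
    using \<open>w' = vec_to_wo w\<close> by (intro exI[of _ "vec_to_wo d"]) auto
qed

lemma measure_unimodular_simplex_wellorder:
  fixes W :: "(real^'n::{finite, wellorder}) set"
  assumes card: "card W = CARD('n)" and lattice: "\<forall>w\<in>W. lattice_point w"
    and dual: "has_integral_dual_basis W"
  shows "fact CARD('n) * measure lebesgue (convex hull (insert 0 W)) = 1"
proof -
  obtain d where d: "\<And>w. w \<in> W \<Longrightarrow> lattice_point (d w) \<and> d w \<bullet> w = 1 \<and> (\<forall>w'\<in>W - {w}. d w \<bullet> w' = 0)"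
    using dual unfolding has_integral_dual_basis_def by metis
  have "finite W" using card card_ge_0_finite by force
  have "0 \<notin> W" using d by force
  obtain f where f: "bij_betw f (UNIV :: 'n set) W"
    using finite_same_card_bij[of "UNIV :: 'n set" W] \<open>finite W\<close> card by auto
  have fW: "f a \<in> W" for a using f bij_betwE by blast
  define M where "M = (\<chi> i j. f j $ i - 0 $ i)"
  define D where "D = (\<chi> a b. d (f a) $ b)"
  have "(D ** M) $ a $ b = (if a = b then 1 else 0)" for a b
  proof -
    have "(D ** M) $ a $ b = d (f a) \<bullet> f b"
      by (simp add: matrix_matrix_mult_def D_def M_def inner_vec_def)
    also have "\<dots> = (if a = b then 1 else 0)"
      using d[OF fW[of a]] fW[of b] f unfolding bij_betw_def inj_on_def by auto
    finally show ?thesis .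
  qed
  then have "D ** M = mat 1" by (simp add: vec_eq_iff mat_def)
  moreover have "D $ a $ b \<in> \<int>" "M $ a $ b \<in> \<int>" for a b
    using d[OF fW[of a]] lattice fW[of b] by (auto simp: D_def M_def lattice_point_def)
  ultimately have "\<bar>det M\<bar> = 1" by (rule abs_det_eq_1_if_integral_left_inverse)
  moreover have "measure lborel (convex hull (insert 0 W)) = \<bar>det M\<bar> / fact CARD('n)"
    unfolding M_def using \<open>finite W\<close> \<open>0 \<notin> W\<close> card f
    by (intro content_simplex) auto
  moreover have "convex hull (insert 0 W) \<in> sets borel"
    using \<open>finite W\<close> by (simp add: compact_imp_closed finite_imp_compact_convex_hull)
  ultimately show ?thesis by simp
qed

lemma measure_unimodular_simplex:
  fixes W :: "(real^'n::finite) set"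
  assumes card: "card W = CARD('n)" and lattice: "\<forall>w\<in>W. lattice_point w"
    and dual: "has_integral_dual_basis W"
  shows "fact CARD('n) * measure lebesgue (convex hull (insert 0 W)) = 1"
proof -
  have "finite W" using card card_ge_0_finite by force
  have "vec_to_wo (0 :: real^'n) = 0" by (rule linear_0[OF linear_vec_to_wo])
  then have hull: "vec_to_wo ` (convex hull (insert 0 W)) = convex hull (insert 0 (vec_to_wo ` W))"
    by (simp add: convex_hull_linear_image[OF linear_vec_to_wo])
  have "card (vec_to_wo ` W) = CARD('n well_ordered)"
    using card card_image[OF inj_on_subset[OF inj_vec_to_wo, of W]] by (simp add: card_well_ordered)
  moreover have "\<forall>w\<in>vec_to_wo ` W. lattice_point w" using lattice by simp
  ultimately have "fact CARD('n well_ordered)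
      * measure lebesgue (convex hull (insert 0 (vec_to_wo ` W))) = 1"
    using has_integral_dual_basis_vec_to_wo[OF dual] by (rule measure_unimodular_simplex_wellorder)
  moreover have "convex hull (insert 0 W) \<in> sets borel"
    using \<open>finite W\<close> by (simp add: compact_imp_closed finite_imp_compact_convex_hull)
  moreover have "convex hull (insert 0 (vec_to_wo ` W)) \<in> sets borel"
    using \<open>finite W\<close> by (simp add: compact_imp_closed finite_imp_compact_convex_hull)
  ultimately show ?thesis
    using measure_vec_to_wo_image[of "convex hull (insert 0 W)"]
    by (simp add: hull card_well_ordered)
qed

section \<open>The cycle configuration\<close>

lemma even_sum_signs_iff:
  fixes \<sigma> :: "'a \<Rightarrow> int"
  assumes "finite A" and "\<forall>j\<in>A. \<sigma> j \<in> {-1, 1}"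
  shows "even (sum \<sigma> A) \<longleftrightarrow> even (card A)"
  using assms by (induction A rule: finite_induct) auto

lemma sum_alternating_signs: "(\<Sum>j = 1..2 * m. (-1::int) ^ j) = 0"
  by (induction m) (simp_all add: sum.cl_ivl_Suc)

locale cycle_adjacency =
  fixes N n :: nat and ix :: "nat \<Rightarrow> 'n::finite"
  assumes N_eq: "N = n + 1" and N_ge: "N \<ge> 4" and even_N: "even N"
    and card_n: "CARD('n) = n" and bij_ix: "bij_betw ix {1..n} (UNIV :: 'n set)"
begin

abbreviation e :: "nat \<Rightarrow> real^'n" where
  "e \<equiv> ebasis ix N"

definition u :: "nat \<Rightarrow> real^'n" where
  "u j = e (j - 1) - e j"

definition wt :: "nat \<Rightarrow> real" where
  "wt j = (if j = 1 then 2 else 1)"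

text \<open>The coordinate of \<open>functional \<alpha>\<close> at \<open>e\<^sub>k\<close> is \<open>-(\<alpha>\<^sub>1 + \<dots> + \<alpha>\<^sub>k)\<close>, so that
  \<open>functional \<alpha> \<bullet> u\<^sub>j = \<alpha>\<^sub>j\<close> whenever \<open>\<alpha>\<^sub>1 + \<dots> + \<alpha>\<^sub>N = 0\<close>.\<close>
definition functional :: "(nat \<Rightarrow> real) \<Rightarrow> real^'n" where
  "functional \<alpha> = (\<chi> m. - (\<Sum>j = 1..the_inv_into {1..n} ix m. \<alpha> j))"

lemma e_0 [simp]: "e 0 = 0" and e_N [simp]: "e N = 0"
  by (auto simp: ebasis_def)

lemma inner_functional_e:
  assumes "sum \<alpha> {1..N} = 0" and "k \<le> N"
  shows "functional \<alpha> \<bullet> e k = - (\<Sum>j = 1..k. \<alpha> j)"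
proof -
  consider "k = 0" | "k = N" | "1 \<le> k" "k < N" using assms(2) by linarith
  then show ?thesis
  proof cases
    case 3
    then have "k \<in> {1..n}" using N_eq by auto
    then have "the_inv_into {1..n} ix (ix k) = k"
      using bij_ix by (simp add: bij_betw_def the_inv_into_f_f)
    then show ?thesis using 3 by (simp add: ebasis_def functional_def inner_axis)
  qed (use assms in auto)
qed

lemma inner_functional_u:
  assumes "sum \<alpha> {1..N} = 0" and "j \<in> {1..N}"
  shows "functional \<alpha> \<bullet> u j = \<alpha> j"
proof -
  have "(\<Sum>i = 1..j. \<alpha> i) = (\<Sum>i = 1..j - 1. \<alpha> i) + \<alpha> j"
    using assms(2) by (cases j) (auto simp: sum.cl_ivl_Suc)
  moreover have "functional \<alpha> \<bullet> e (j - 1) = - (\<Sum>i = 1..j - 1. \<alpha> i)"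
    using assms by (intro inner_functional_e) auto
  ultimately show ?thesis
    using assms by (simp add: u_def inner_diff_right inner_functional_e)
qed

lemma lattice_point_functional: "(\<And>j. \<alpha> j \<in> \<int>) \<Longrightarrow> lattice_point (functional \<alpha>)"
  by (auto simp: lattice_point_def functional_def)

lemma exists_dual_functional:
  assumes "j \<in> {1..N}" and "k \<in> {1..N}" and "j \<noteq> k"
  obtains d where "lattice_point d" and "d \<bullet> u j = 1" and "d \<bullet> u k = -1"
    and "\<forall>m\<in>{1..N} - {j, k}. d \<bullet> u m = 0"
proof -
  define \<alpha> where "\<alpha> m = (if m = j then 1 else if m = k then -1 else 0 :: real)" for m
  have "sum \<alpha> {1..N} = 0"
    using assms by (simp add: \<alpha>_def sum.If_cases Int_absorb1)
  then show ?thesis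
    using assms
    by (intro that[of "functional \<alpha>"] lattice_point_functional) (auto simp: inner_functional_u \<alpha>_def)
qed

lemma exists_third_index:
  obtains m where "m \<in> {1..N}" and "m \<noteq> j" and "m \<noteq> k"
proof -
  have "\<exists>m::nat. (m = 1 \<or> m = 2 \<or> m = 3) \<and> m \<noteq> j \<and> m \<noteq> k" by presburger
  then show ?thesis using N_ge that by force
qed

lemma scaleR_u_eq_iff:
  assumes "s \<in> {-1, 1}" "t \<in> {-1, 1}" "j \<in> {1..N}" "k \<in> {1..N}"
  shows "s *\<^sub>R u j = t *\<^sub>R u k \<longleftrightarrow> j = k \<and> s = t"
proof
  assume eq: "s *\<^sub>R u j = t *\<^sub>R u k"
  obtain m where m: "m \<in> {1..N}" "m \<noteq> j" "m \<noteq> k" by (rule exists_third_index)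
  then obtain d where "d \<bullet> u j = 1" "\<forall>i\<in>{1..N} - {j, m}. d \<bullet> u i = 0"
    using exists_dual_functional assms(3) by metis
  then have "s = t * (d \<bullet> u k)" using arg_cong[OF eq, of "inner d"] by simp
  moreover have "d \<bullet> u k = 0" if "k \<noteq> j" using that m assms(4) \<open>\<forall>i\<in>_. _\<close> by blast
  ultimately show "j = k \<and> s = t" using assms(1) \<open>d \<bullet> u j = 1\<close> by force
qed simp

lemma scaleR_u_nonzero:
  assumes "s \<noteq> 0" and "j \<in> {1..N}"
  shows "s *\<^sub>R u j \<noteq> 0"
proof -
  obtain m where "m \<in> {1..N}" "m \<noteq> j" by (rule exists_third_index)
  then obtain d where "d \<bullet> u j = 1" using exists_dual_functional assms(2) by metis
  then show ?thesis using assms(1) by (metis inner_scaleR_right inner_zero_right mult_1_right)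
qed

lemma e_mod_N: "j \<in> {1..N} \<Longrightarrow> e (j mod N) = e j"
  by (cases "j = N") auto

lemma cycle_edges_eq: "cycle_edges N = (\<lambda>j. {j - 1, j mod N}) ` {1..N}"
proof -
  have "{{i, Suc i} | i. i < N - 1} = (\<lambda>j. {j - 1, j mod N}) ` {1..N - 1}"
    by (force simp: image_iff)
  moreover have "{1..N} = insert N {1..N - 1}" using N_ge by auto
  ultimately show ?thesis
    unfolding cycle_edges_def by (auto simp: insert_commute)
qed

lemma edge_differences:
  "{e a - e b | a b. {a, b} \<in> cycle_edges N} = {s *\<^sub>R u j | s j. s \<in> {-1, 1} \<and> j \<in> {1..N}}"
proof (intro set_eqI iffI)
  fix x assume "x \<in> {e a - e b | a b. {a, b} \<in> cycle_edges N}"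
  then obtain a b j where "x = e a - e b" "j \<in> {1..N}" "{a, b} = {j - 1, j mod N}"
    unfolding cycle_edges_eq by blast
  then have "x = 1 *\<^sub>R u j \<or> x = (-1) *\<^sub>R u j"
    by (auto simp: doubleton_eq_iff u_def e_mod_N)
  then show "x \<in> {s *\<^sub>R u j | s j. s \<in> {-1, 1} \<and> j \<in> {1..N}}"
    using \<open>j \<in> {1..N}\<close> by blast
next
  fix x assume "x \<in> {s *\<^sub>R u j | s j. s \<in> {-1, 1} \<and> j \<in> {1..N}}"
  then obtain s j where x: "x = s *\<^sub>R u j" "s \<in> {-1, 1}" "j \<in> {1..N}" by blast
  then have edges: "{j - 1, j mod N} \<in> cycle_edges N" "{j mod N, j - 1} \<in> cycle_edges N"
    unfolding cycle_edges_eq by (auto simp: insert_commute)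
  show "x \<in> {e a - e b | a b. {a, b} \<in> cycle_edges N}"
    using x(2)
  proof
    assume "s = -1"
    then have "x = e (j mod N) - e (j - 1)" using x by (simp add: u_def e_mod_N)
    then show ?thesis using edges by blast
  next
    assume "s \<in> {1}"
    then have "x = e (j - 1) - e (j mod N)" using x by (simp add: u_def e_mod_N)
    then show ?thesis using edges by blast
  qed
qed

lemma S_C_eq: "S_C ix N = insert 0 {s *\<^sub>R u j | s j. s \<in> {-1, 1} \<and> j \<in> {1..N}}"
  unfolding S_C_def edge_differences by simp

lemma S_C_cases:
  assumes "p \<in> S_C ix N"
  obtains "p = 0" | s j where "s \<in> {-1, 1}" "j \<in> {1..N}" "p = s *\<^sub>R u j"
  using assms unfolding S_C_eq by blast

lemma scaleR_u_in_S_C: "s \<in> {-1, 1} \<Longrightarrow> j \<in> {1..N} \<Longrightarrow> s *\<^sub>R u j \<in> S_C ix N"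
  unfolding S_C_eq by blast

lemma finite_S_C: "finite (S_C ix N)"
proof -
  have "{s *\<^sub>R u j | s j. s \<in> {-1, 1} \<and> j \<in> {1..N}} \<subseteq> (\<lambda>(s, j). s *\<^sub>R u j) ` ({-1, 1} \<times> {1..N})"
  proof
    fix x assume "x \<in> {s *\<^sub>R u j | s j. s \<in> {-1, 1} \<and> j \<in> {1..N}}"
    then obtain s j where "x = s *\<^sub>R u j" "s \<in> {-1, 1}" "j \<in> {1..N}" by blast
    then show "x \<in> (\<lambda>(s, j). s *\<^sub>R u j) ` ({-1, 1} \<times> {1..N})"
      by (intro image_eqI[of _ _ "(s, j)"]) simp_all
  qed
  then show ?thesis unfolding S_C_eq by (simp add: finite_subset)
qed

lemma lattice_point_scaleR_u:
  assumes "s \<in> {-1, 1}"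
  shows "lattice_point (s *\<^sub>R u j)"
proof -
  have "e k $ m \<in> \<int>" for k m by (simp add: ebasis_def axis_def)
  then show ?thesis using assms by (auto simp: lattice_point_def u_def)
qed

lemma lattice_point_S_C: "p \<in> S_C ix N \<Longrightarrow> lattice_point p"
  by (elim S_C_cases) (simp_all add: lattice_point_def[of 0] lattice_point_scaleR_u)

lemma omega_0 [simp]: "omega ix N 0 = 0"
  by (simp add: omega_def)

lemma omega_scaleR_u:
  assumes "s \<in> {-1, 1}" and "j \<in> {1..N}"
  shows "omega ix N (s *\<^sub>R u j) = wt j"
proof -
  have one: "(1::nat) \<in> {1..N}" using N_ge by auto
  have "s *\<^sub>R u j = e 1 \<longleftrightarrow> j = 1 \<and> s = -1"
    using scaleR_u_eq_iff[OF assms(1) _ assms(2) one, of "-1"] by (simp add: u_def)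
  moreover have "s *\<^sub>R u j = - e 1 \<longleftrightarrow> j = 1 \<and> s = 1"
    using scaleR_u_eq_iff[OF assms(1) _ assms(2) one, of 1] by (simp add: u_def)
  moreover have "s *\<^sub>R u j \<noteq> 0"
    using assms by (intro scaleR_u_nonzero) auto
  ultimately show ?thesis
    using assms(1) unfolding omega_def wt_def by auto
qed

section \<open>The cells \<open>conv(V\<^sub>N - {v\<^sub>i})\<close>\<close>

text \<open>For \<open>\<lambda> = l\<close>, \<open>cell_rays l i\<close> is \<open>{v\<^sub>j | 1 \<le> j \<le> N, j \<noteq> i}\<close> and \<open>cell_vertices l i\<close> is
  \<open>V\<^sub>N - {v\<^sub>i}\<close> (lemma \<open>VV_Diff_vv\<close>).\<close>
definition cell_rays :: "(nat \<Rightarrow> int) \<Rightarrow> nat \<Rightarrow> (real^'n) set" where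
  "cell_rays l i = (\<lambda>j. of_int (l j) *\<^sub>R u j) ` ({1..N} - {i})"

definition cell_vertices :: "(nat \<Rightarrow> int) \<Rightarrow> nat \<Rightarrow> (real^'n) set" where
  "cell_vertices l i = insert 0 (cell_rays l i)"

lemma Lambda_sign:
  assumes "l \<in> Lambda N" and "j \<in> {1..N}"
  shows "(of_int (l j) :: real) \<in> {-1, 1}"
proof -
  have "l j \<in> {-1, 1}" using assms by (simp add: Lambda_def)
  then show ?thesis by auto
qed

lemma inj_on_signed_u:
  assumes "l \<in> Lambda N"
  shows "inj_on (\<lambda>j. of_int (l j) *\<^sub>R u j) {1..N}"
  using scaleR_u_eq_iff[OF Lambda_sign Lambda_sign] assms by (auto simp: inj_on_def)

lemma signed_u_nonzero: "l \<in> Lambda N \<Longrightarrow> j \<in> {1..N} \<Longrightarrow> of_int (l j) *\<^sub>R u j \<noteq> 0"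
  using scaleR_u_nonzero Lambda_sign by fastforce

lemma VV_Diff_vv:
  assumes "l \<in> Lambda N" and "i \<in> {1..N}"
  shows "VV ix N l - {vv ix N l i} = cell_vertices l i"
proof -
  let ?v = "\<lambda>j. of_int (l j) *\<^sub>R u j"
  have "{0..N} = insert 0 {1..N}" by auto
  then have "VV ix N l = insert (vv ix N l 0) (vv ix N l ` {1..N})"
    by (simp add: VV_def)
  also have "vv ix N l ` {1..N} = ?v ` {1..N}"
    by (rule image_cong) (simp_all add: vv_def u_def)
  finally have "VV ix N l = insert 0 (?v ` {1..N})"
    by (simp add: vv_def)
  moreover have "vv ix N l i = ?v i"
    using assms(2) by (simp add: vv_def u_def)
  moreover have "?v ` {1..N} - {?v i} = ?v ` ({1..N} - {i})"
    using inj_on_image_set_diff[OF inj_on_signed_u[OF assms(1)], of "{1..N}" "{i}"] assms(2) by simp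
  ultimately show ?thesis
    using signed_u_nonzero[OF assms] by (auto simp: cell_vertices_def cell_rays_def)
qed

lemma mem_cell_vertices_iff:
  assumes "l \<in> Lambda N" and "s \<in> {-1, 1}" and "j \<in> {1..N}"
  shows "s *\<^sub>R u j \<in> cell_vertices l i \<longleftrightarrow> j \<noteq> i \<and> s = of_int (l j)"
proof -
  have "s *\<^sub>R u j \<noteq> 0" using assms(2,3) by (intro scaleR_u_nonzero) auto
  then have "s *\<^sub>R u j \<in> cell_vertices l i
      \<longleftrightarrow> (\<exists>k\<in>{1..N} - {i}. s *\<^sub>R u j = of_int (l k) *\<^sub>R u k)"
    by (auto simp: cell_vertices_def cell_rays_def)
  also have "\<dots> \<longleftrightarrow> (\<exists>k\<in>{1..N} - {i}. j = k \<and> s = of_int (l k))"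
    by (rule bex_cong[OF refl])
      (simp add: scaleR_u_eq_iff[OF assms(2) Lambda_sign[OF assms(1)] assms(3)])
  also have "\<dots> \<longleftrightarrow> j \<noteq> i \<and> s = of_int (l j)"
    using assms(3) by auto
  finally show ?thesis .
qed

lemma cell_vertices_subset:
  assumes "l \<in> Lambda N"
  shows "cell_vertices l i \<subseteq> S_C ix N"
proof -
  have "0 \<in> S_C ix N" by (simp add: S_C_eq)
  then show ?thesis
    by (auto simp: cell_vertices_def cell_rays_def intro!: scaleR_u_in_S_C Lambda_sign[OF assms])
qed

lemma integral_dual_basis_cell:
  assumes "l \<in> Lambda N" and "i \<in> {1..N}"
  shows "has_integral_dual_basis (cell_rays l i)"
  unfolding has_integral_dual_basis_def cell_rays_def
proof
  fix w assume "w \<in> (\<lambda>j. of_int (l j) *\<^sub>R u j) ` ({1..N} - {i})"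
  then obtain m where m: "m \<in> {1..N}" "m \<noteq> i" "w = of_int (l m) *\<^sub>R u m" by blast
  then obtain d where d: "lattice_point d" "d \<bullet> u m = 1" "\<forall>k\<in>{1..N} - {m, i}. d \<bullet> u k = 0"
    using exists_dual_functional assms(2) by metis
  have lm: "of_int (l m) * of_int (l m) = (1::real)"
    using Lambda_sign[OF assms(1) m(1)] by auto
  show "\<exists>d. lattice_point d \<and> d \<bullet> w = 1
      \<and> (\<forall>w'\<in>(\<lambda>j. of_int (l j) *\<^sub>R u j) ` ({1..N} - {i}) - {w}. d \<bullet> w' = 0)"
  proof (intro exI[of _ "of_int (l m) *\<^sub>R d"] conjI ballI)
    show "lattice_point (of_int (l m) *\<^sub>R d)"
      using d(1) by (simp add: lattice_point_def)
    show "(of_int (l m) *\<^sub>R d) \<bullet> w = 1"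
      using m(3) d(2) lm by simp
    fix w' assume w': "w' \<in> (\<lambda>j. of_int (l j) *\<^sub>R u j) ` ({1..N} - {i}) - {w}"
    then obtain k where k: "k \<in> {1..N}" "k \<noteq> i" "w' = of_int (l k) *\<^sub>R u k" by blast
    with w' m(3) have "k \<noteq> m" by auto
    then show "(of_int (l m) *\<^sub>R d) \<bullet> w' = 0" using d(3) k by simp
  qed
qed

lemma finite_cell_rays: "finite (cell_rays l i)"
  by (simp add: cell_rays_def)

lemma card_cell_rays:
  assumes "l \<in> Lambda N" and "i \<in> {1..N}"
  shows "card (cell_rays l i) = n"
proof -
  have "card (cell_rays l i) = card ({1..N} - {i})"
    unfolding cell_rays_def by (rule card_image[OF inj_on_subset[OF inj_on_signed_u[OF assms(1)]]]) auto
  then show ?thesis using assms(2) N_eq by simp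
qed

lemma
  assumes "l \<in> Lambda N" and "i \<in> {1..N}"
  shows affine_independent_cell_vertices: "\<not> affine_dependent (cell_vertices l i)"
    and card_cell_vertices: "card (cell_vertices l i) = N"
    and aff_dim_cell_vertices: "aff_dim (cell_vertices l i) = int n"
proof -
  have "0 \<notin> cell_rays l i" using signed_u_nonzero[OF assms(1)] by (auto simp: cell_rays_def)
  then show "\<not> affine_dependent (cell_vertices l i)"
    using independent_if_integral_dual_basis[OF integral_dual_basis_cell[OF assms]]
    by (simp add: cell_vertices_def affine_dependent_iff_dependent)
  have "card (cell_vertices l i) = Suc (card (cell_rays l i))"
    using \<open>0 \<notin> cell_rays l i\<close> finite_cell_rays by (simp add: cell_vertices_def)
  then show "card (cell_vertices l i) = N"
    using card_cell_rays[OF assms] N_eq by simp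
  then show "aff_dim (cell_vertices l i) = int n"
    using aff_dim_affine_independent[OF \<open>\<not> affine_dependent (cell_vertices l i)\<close>] N_eq by simp
qed

lemma contact_eq_cell_vertices:
  assumes l: "l \<in> Lambda N" and i: "i \<in> {1..N}"
    and c: "\<forall>j\<in>{1..N}. c \<bullet> u j = \<alpha> j"
    and alpha_i: "\<bar>\<alpha> i\<bar> < wt i" and alpha: "\<forall>j\<in>{1..N} - {i}. \<alpha> j = wt j * of_int (l j)"
  shows "\<forall>p\<in>S_C ix N. 0 + c \<bullet> p \<le> omega ix N p"
    and "contact (S_C ix N) (omega ix N) 0 c = cell_vertices l i"
proof -
  have key: "c \<bullet> p \<le> omega ix N p \<and> (c \<bullet> p = omega ix N p \<longleftrightarrow> p \<in> cell_vertices l i)"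
    if "p \<in> S_C ix N" for p
    using that
  proof (cases rule: S_C_cases)
    case 1
    then show ?thesis by (simp add: cell_vertices_def)
  next
    case (2 s j)
    have cp: "c \<bullet> p = s * \<alpha> j" using 2(2,3) c by simp
    have wp: "omega ix N p = wt j" using 2 omega_scaleR_u by simp
    have mem: "p \<in> cell_vertices l i \<longleftrightarrow> j \<noteq> i \<and> s = of_int (l j)"
      using mem_cell_vertices_iff[OF l 2(1,2)] 2(3) by simp
    have "s * \<alpha> j \<le> wt j \<and> (s * \<alpha> j = wt j \<longleftrightarrow> j \<noteq> i \<and> s = of_int (l j))"
    proof (cases "j = i")
      case True
      then have "\<bar>s * \<alpha> j\<bar> < wt j" using alpha_i 2(1) by (auto simp: abs_mult)
      then show ?thesis using True by auto
    next
      case False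
      then have aj: "\<alpha> j = wt j * of_int (l j)" using alpha 2(2) by simp
      have "wt j > 0" by (simp add: wt_def)
      consider "s = -1" "of_int (l j) = (-1::real)" | "s = -1" "of_int (l j) = (1::real)"
        | "s = 1" "of_int (l j) = (-1::real)" | "s = 1" "of_int (l j) = (1::real)"
        using 2(1) Lambda_sign[OF l 2(2)] by auto
      then show ?thesis
        using aj \<open>wt j > 0\<close> False by cases simp_all
    qed
    then show ?thesis unfolding cp wp mem .
  qed
  then show "\<forall>p\<in>S_C ix N. 0 + c \<bullet> p \<le> omega ix N p" by simp
  show "contact (S_C ix N) (omega ix N) 0 c = cell_vertices l i"
    using key cell_vertices_subset[OF l] by (auto simp: contact_def)
qed

lemma exists_supporting_functional:
  assumes l: "l \<in> Lambda N" and i: "i \<in> {1..N}" and "l i = l 1"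
  obtains c where "\<forall>p\<in>S_C ix N. 0 + c \<bullet> p \<le> omega ix N p"
    and "contact (S_C ix N) (omega ix N) 0 c = cell_vertices l i"
proof -
  define \<alpha> where "\<alpha> j = of_int (l j) + (if j = 1 then of_int (l 1) else 0)
    - (if j = i then of_int (l 1) else (0::real))" for j
  have "(1::nat) \<in> {1..N}" using N_ge by simp
  then have "sum \<alpha> {1..N} = of_int (sum l {1..N})"
    using i by (simp add: \<alpha>_def sum.distrib sum_subtractf)
  also have "\<dots> = 0" using l by (simp add: Lambda_def)
  finally have "\<forall>j\<in>{1..N}. functional \<alpha> \<bullet> u j = \<alpha> j"
    by (simp add: inner_functional_u)
  moreover have "\<bar>\<alpha> i\<bar> < wt i"
    using Lambda_sign[OF l i] \<open>l i = l 1\<close> by (auto simp: \<alpha>_def wt_def)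
  moreover have "\<forall>j\<in>{1..N} - {i}. \<alpha> j = wt j * of_int (l j)"
    by (auto simp: \<alpha>_def wt_def)
  ultimately show ?thesis
    using contact_eq_cell_vertices[OF l i] that by blast
qed

lemma sum_split_first: "sum f {1..N} = f 1 + sum f {2..N}"
  using N_ge by (simp add: sum.atLeast_Suc_atMost numeral_2_eq_2)

lemma odd_sum_signs_tail:
  assumes "\<forall>j\<in>{2..N}. \<sigma> j \<in> {-1, 1::int}"
  shows "odd (sum \<sigma> {2..N})"
  using even_sum_signs_iff[OF _ assms] even_N N_ge by simp

lemma not_all_bounds_tight:
  assumes sum: "sum \<alpha> {1..N} = 0" and "g \<le> 0"
    and tight: "\<forall>j\<in>{1..N}. \<bar>\<alpha> j\<bar> = wt j - g"
  shows False
proof -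
  define \<sigma> where "\<sigma> j = (if \<alpha> j \<ge> 0 then 1 else -1 :: int)" for j
  have alpha: "\<alpha> j = of_int (\<sigma> j) * (wt j - g)" if "j \<in> {1..N}" for j
    using bspec[OF tight that] by (cases "\<alpha> j \<ge> 0") (auto simp: \<sigma>_def)
  define K where "K = sum \<sigma> {2..N}"
  have "odd K" unfolding K_def by (rule odd_sum_signs_tail) (simp add: \<sigma>_def)
  have "sum \<alpha> {2..N} = of_int K * (1 - g)"
    unfolding K_def of_int_sum sum_distrib_right using alpha by (intro sum.cong) (auto simp: wt_def)
  moreover have "\<alpha> 1 = of_int (\<sigma> 1) * (2 - g)"
    using alpha[of 1] N_ge by (simp add: wt_def)
  ultimately have "of_int (\<sigma> 1) * (2 - g) + of_int K * (1 - g) = 0"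
    using sum sum_split_first[of \<alpha>] by simp
  then have "\<bar>of_int K * (1 - g)\<bar> = 2 - g"
    using \<open>g \<le> 0\<close> by (auto simp: \<sigma>_def split: if_splits)
  then have eq: "of_int \<bar>K\<bar> * (1 - g) = 2 - g"
    using \<open>g \<le> 0\<close> by (simp add: abs_mult)
  have "\<bar>K\<bar> = 1 \<or> \<bar>K\<bar> \<ge> 3" using \<open>odd K\<close> by presburger
  then show False
  proof
    assume "\<bar>K\<bar> = 1"
    with eq show False by simp
  next
    assume "\<bar>K\<bar> \<ge> 3"
    then have "of_int \<bar>K\<bar> * (1 - g) \<ge> 3 * (1 - g)"
      using \<open>g \<le> 0\<close> by (intro mult_right_mono) auto
    with eq \<open>g \<le> 0\<close> show False by simp
  qed
qed

lemma exists_Lambda_of_tight_signs: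
  assumes sum: "sum \<alpha> {1..N} = 0" and i: "i \<in> {1..N}" and alpha_i: "\<bar>\<alpha> i\<bar> < wt i"
    and tight: "\<forall>j\<in>{1..N} - {i}. \<bar>\<alpha> j\<bar> = wt j"
  obtains l where "l \<in> Lambda N" and "l i = l 1" and "\<forall>j\<in>{1..N} - {i}. \<alpha> j = wt j * of_int (l j)"
proof -
  define \<sigma> where "\<sigma> j = (if \<alpha> j \<ge> 0 then 1 else -1 :: int)" for j
  have alpha: "\<alpha> j = wt j * of_int (\<sigma> j)" if "j \<in> {1..N} - {i}" for j
    using bspec[OF tight that] by (cases "\<alpha> j \<ge> 0") (auto simp: \<sigma>_def)
  show ?thesis
  proof (cases "i = 1")
    case True
    define K where "K = sum \<sigma> {2..N}"
    have "odd K" unfolding K_def by (rule odd_sum_signs_tail) (simp add: \<sigma>_def)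
    have "sum \<alpha> {2..N} = of_int K"
      unfolding K_def of_int_sum using alpha True by (intro sum.cong) (auto simp: wt_def)
    then have "\<alpha> 1 = - of_int K" using sum sum_split_first[of \<alpha>] by simp
    then have "\<bar>K\<bar> < 2" using alpha_i True by (simp add: wt_def)
    with \<open>odd K\<close> have K: "K = 1 \<or> K = -1" by presburger
    define l where "l j = (if j = 1 then - K else if j \<in> {1..N} then \<sigma> j else 0)" for j
    have "sum l {2..N} = K" unfolding K_def l_def by (intro sum.cong) auto
    then have "l \<in> Lambda N"
      using K N_ge sum_split_first[of l] by (auto simp: Lambda_def l_def \<sigma>_def)
    moreover have "\<forall>j\<in>{1..N} - {i}. \<alpha> j = wt j * of_int (l j)"
      using alpha True by (simp add: l_def)
    ultimately show ?thesis using that True by blast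
  next
    case False
    then have i2: "i \<in> {2..N}" using i by auto
    have split: "sum f {1..N} = f 1 + f i + sum f ({2..N} - {i})" for f :: "nat \<Rightarrow> 'a::comm_monoid_add"
      using sum_split_first[of f] sum.remove[OF _ i2, of f] by (simp add: add.assoc)
    define K where "K = sum \<sigma> ({2..N} - {i})"
    have "card ({2..N} - {i}) = N - 2" using i2 by simp
    then have "even K"
      using even_sum_signs_iff[of "{2..N} - {i}" \<sigma>] even_N N_ge by (simp add: K_def \<sigma>_def)
    have "sum \<alpha> ({2..N} - {i}) = of_int K"
      unfolding K_def of_int_sum using alpha by (intro sum.cong) (auto simp: wt_def)
    moreover have "\<alpha> 1 = 2 * of_int (\<sigma> 1)" using alpha[of 1] False N_ge by (simp add: wt_def)
    ultimately have "\<alpha> i = - of_int (2 * \<sigma> 1 + K)" using sum split[of \<alpha>] by simp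
    with alpha_i False have "\<bar>2 * \<sigma> 1 + K\<bar> < 1" by (simp add: wt_def)
    then have K: "K = - 2 * \<sigma> 1" by simp
    define l where "l j = (if j = i then \<sigma> 1 else if j \<in> {1..N} then \<sigma> j else 0)" for j
    have "sum l ({2..N} - {i}) = K" unfolding K_def l_def by (intro sum.cong) auto
    then have "l \<in> Lambda N"
      using K i False N_ge split[of l] by (auto simp: Lambda_def l_def \<sigma>_def)
    moreover have "l i = l 1" using False N_ge by (simp add: l_def)
    moreover have "\<forall>j\<in>{1..N} - {i}. \<alpha> j = wt j * of_int (l j)"
      using alpha False by (simp add: l_def)
    ultimately show ?thesis using that by blast
  qed
qed

lemma sum_u: "(\<Sum>j = 1..N. u j) = 0"
proof -
  have "(\<Sum>j = 1..k. u j) = e 0 - e k" for k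
    by (induction k) (simp_all add: sum.cl_ivl_Suc u_def)
  then show ?thesis by simp
qed

lemma lower_functional_offset_nonpos:
  assumes "\<forall>p\<in>S_C ix N. g + c \<bullet> p \<le> omega ix N p"
  shows "g \<le> 0"
  using assms by (auto simp: S_C_eq)

lemma abs_inner_u_le:
  assumes below: "\<forall>p\<in>S_C ix N. g + c \<bullet> p \<le> omega ix N p" and j: "j \<in> {1..N}"
  shows "\<bar>c \<bullet> u j\<bar> \<le> wt j - g"
proof -
  have "g + s * (c \<bullet> u j) \<le> wt j" if "s \<in> {-1, 1}" for s
    using below scaleR_u_in_S_C[OF that j] omega_scaleR_u[OF that j] by auto
  from this[of 1] this[of "-1"] show ?thesis by simp
qed

lemma card_contact_le:
  assumes below: "\<forall>p\<in>S_C ix N. g + c \<bullet> p \<le> omega ix N p"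
  shows "card (contact (S_C ix N) (omega ix N) g c)
    \<le> (if g = 0 then 1 else 0) + card {j\<in>{1..N}. \<bar>c \<bullet> u j\<bar> = wt j - g}"
proof -
  let ?J = "{j\<in>{1..N}. \<bar>c \<bullet> u j\<bar> = wt j - g}"
  define sgn where "sgn j = (if c \<bullet> u j \<ge> 0 then 1 else -1 :: real)" for j
  have "wt j - g > 0" for j
    using lower_functional_offset_nonpos[OF below] by (simp add: wt_def)
  have "contact (S_C ix N) (omega ix N) g c \<subseteq> (if g = 0 then {0} else {}) \<union> (\<lambda>j. sgn j *\<^sub>R u j) ` ?J"
  proof
    fix p assume "p \<in> contact (S_C ix N) (omega ix N) g c"
    then have p: "p \<in> S_C ix N" "g + c \<bullet> p = omega ix N p" by (auto simp: contact_def)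
    from p(1) show "p \<in> (if g = 0 then {0} else {}) \<union> (\<lambda>j. sgn j *\<^sub>R u j) ` ?J"
    proof (cases rule: S_C_cases)
      case 1
      then show ?thesis using p(2) by simp
    next
      case (2 s j)
      then have "g + s * (c \<bullet> u j) = wt j" using p(2) omega_scaleR_u by simp
      then have "j \<in> ?J \<and> s = sgn j"
        using abs_inner_u_le[OF below 2(2)] \<open>wt j - g > 0\<close> 2(1,2)
        by (auto simp: sgn_def split: if_splits)
      then show ?thesis using 2(3) by auto
    qed
  qed
  then have "card (contact (S_C ix N) (omega ix N) g c)
      \<le> card ((if g = 0 then {0} else {}) \<union> (\<lambda>j. sgn j *\<^sub>R u j) ` ?J)"
    by (intro card_mono) auto
  also have "\<dots> \<le> (if g = 0 then 1 else 0) + card ?J"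
    by (rule order_trans[OF card_Un_le]) (auto intro: card_image_le)
  finally show ?thesis .
qed

lemma lower_contact_classification:
  assumes below: "\<forall>p\<in>S_C ix N. g + c \<bullet> p \<le> omega ix N p"
    and card: "N \<le> card (contact (S_C ix N) (omega ix N) g c)"
  obtains l i where "g = 0" and "l \<in> Lambda N" and "i \<in> {1..N}" and "l i = l 1"
    and "contact (S_C ix N) (omega ix N) g c = cell_vertices l i"
proof -
  define \<alpha> where "\<alpha> j = c \<bullet> u j" for j
  define J where "J = {j\<in>{1..N}. \<bar>\<alpha> j\<bar> = wt j - g}"
  have sum: "sum \<alpha> {1..N} = 0"
    unfolding \<alpha>_def using sum_u by (simp flip: inner_sum_right)
  have count: "N \<le> (if g = 0 then 1 else 0) + card J"
    using card card_contact_le[OF below] unfolding J_def \<alpha>_def by linarith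
  have "J \<noteq> {1..N}"
    using not_all_bounds_tight[OF sum lower_functional_offset_nonpos[OF below]] by (auto simp: J_def)
  then have "J \<subset> {1..N}" by (auto simp: J_def)
  then have "card J < N" using psubset_card_mono[of "{1..N}" J] by simp
  then have "g = 0" and "card J = N - 1" using count by (auto split: if_splits)
  obtain i where i: "i \<in> {1..N}" "i \<notin> J" using \<open>J \<subset> {1..N}\<close> by blast
  have "J = {1..N} - {i}"
    using i \<open>card J = N - 1\<close> by (intro card_subset_eq) (auto simp: J_def)
  then have "\<forall>j\<in>{1..N} - {i}. \<bar>\<alpha> j\<bar> = wt j"
    using \<open>g = 0\<close> by (auto simp: J_def)
  moreover have "\<bar>\<alpha> i\<bar> < wt i"
    using abs_inner_u_le[OF below i(1)] i \<open>g = 0\<close> by (auto simp: J_def \<alpha>_def)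
  ultimately obtain l where l: "l \<in> Lambda N" "l i = l 1"
    and alpha: "\<forall>j\<in>{1..N} - {i}. \<alpha> j = wt j * of_int (l j)"
    using exists_Lambda_of_tight_signs[OF sum i(1)] by blast
  have "contact (S_C ix N) (omega ix N) 0 c = cell_vertices l i"
    using contact_eq_cell_vertices[OF l(1) i(1) _ \<open>\<bar>\<alpha> i\<bar> < wt i\<close> alpha] by (simp add: \<alpha>_def)
  then show ?thesis using that \<open>g = 0\<close> l i(1) by blast
qed

lemma Lambda_nonempty: obtains l where "l \<in> Lambda N"
proof
  define l where "l j = (if j \<in> {1..N} then (-1::int) ^ j else 0)" for j
  have "sum l {1..N} = (\<Sum>j = 1..N. (-1::int) ^ j)" by (simp add: l_def)
  also have "\<dots> = 0" using sum_alternating_signs[of "N div 2"] even_N by simp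
  finally have "sum l {1..N} = 0" .
  moreover have "(-1::int) ^ j \<in> {-1, 1}" for j by (cases "even j") auto
  ultimately show "l \<in> Lambda N"
    by (simp add: Lambda_def l_def)
qed

lemma aff_dim_lifted: "aff_dim (lifted (S_C ix N) (omega ix N)) = int DIM(real^'n) + 1"
proof -
  obtain l where l: "l \<in> Lambda N" by (rule Lambda_nonempty)
  have one: "1 \<in> {1..N}" and two: "2 \<in> {1..N}" using N_ge by auto
  obtain c where below: "\<forall>p\<in>S_C ix N. 0 + c \<bullet> p \<le> omega ix N p"
    and contact: "contact (S_C ix N) (omega ix N) 0 c = cell_vertices l 1"
    using exists_supporting_functional[OF l one refl] by blast
  let ?p = "(- of_int (l 2)) *\<^sub>R u 2"
  have sign: "- of_int (l 2) \<in> {-1, 1::real}" using Lambda_sign[OF l two] by auto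
  have "?p \<in> S_C ix N" using scaleR_u_in_S_C[OF sign two] .
  moreover have "?p \<notin> cell_vertices l 1"
    unfolding mem_cell_vertices_iff[OF l sign two] using Lambda_sign[OF l two] by auto
  ultimately show ?thesis
    using aff_dim_lifted_eq_full[OF below] contact aff_dim_cell_vertices[OF l one] card_n by simp
qed

lemma regular_subdivision_eq:
  "regular_subdivision (S_C ix N) (omega ix N)
    = {convex hull (cell_vertices l i) | l i. l \<in> Lambda N \<and> i \<in> {1..N} \<and> l i = l 1}"
proof (intro set_eqI iffI)
  fix C assume "C \<in> regular_subdivision (S_C ix N) (omega ix N)"
  then obtain F where F: "lower_facet_of F (lifted (S_C ix N) (omega ix N))" and C: "C = fst ` F"
    unfolding regular_subdivision_def by blast
  obtain g c where below: "\<forall>p\<in>S_C ix N. g + c \<bullet> p \<le> omega ix N p"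
    and F_hull: "F = convex hull (lift (omega ix N) ` contact (S_C ix N) (omega ix N) g c)"
    and dim: "aff_dim (contact (S_C ix N) (omega ix N) g c) = aff_dim (lifted (S_C ix N) (omega ix N)) - 1"
    by (rule lower_facet_of_liftedE[OF finite_S_C F])
  have "finite (contact (S_C ix N) (omega ix N) g c)"
    using finite_S_C by (simp add: contact_def)
  then have card: "N \<le> card (contact (S_C ix N) (omega ix N) g c)"
    using aff_dim_le_card[of "contact (S_C ix N) (omega ix N) g c"] dim aff_dim_lifted card_n N_eq
    by simp
  obtain l i where "g = 0" "l \<in> Lambda N" "i \<in> {1..N}" "l i = l 1"
    and "contact (S_C ix N) (omega ix N) g c = cell_vertices l i"
    by (rule lower_contact_classification[OF below card])
  moreover have "C = convex hull (contact (S_C ix N) (omega ix N) g c)"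
    unfolding C F_hull by (rule fst_convex_hull_lift)
  ultimately show "C \<in> {convex hull (cell_vertices l i) | l i. l \<in> Lambda N \<and> i \<in> {1..N} \<and> l i = l 1}"
    by auto
next
  fix C assume "C \<in> {convex hull (cell_vertices l i) | l i. l \<in> Lambda N \<and> i \<in> {1..N} \<and> l i = l 1}"
  then obtain l i where l: "l \<in> Lambda N" and i: "i \<in> {1..N}" and "l i = l 1"
    and C: "C = convex hull (cell_vertices l i)" by blast
  obtain c where below: "\<forall>p\<in>S_C ix N. 0 + c \<bullet> p \<le> omega ix N p"
    and contact: "contact (S_C ix N) (omega ix N) 0 c = cell_vertices l i"
    by (rule exists_supporting_functional[OF l i \<open>l i = l 1\<close>])
  have lower: "lower_facet_of (convex hull (lift (omega ix N) ` contact (S_C ix N) (omega ix N) 0 c))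
      (lifted (S_C ix N) (omega ix N))"
    using aff_dim_cell_vertices[OF l i] card_n contact
    by (intro lower_facet_of_lifted[OF finite_S_C below aff_dim_lifted]) simp
  moreover have "fst ` (convex hull (lift (omega ix N) ` contact (S_C ix N) (omega ix N) 0 c)) = C"
    by (simp add: fst_convex_hull_lift contact C)
  ultimately show "C \<in> regular_subdivision (S_C ix N) (omega ix N)"
    unfolding regular_subdivision_def by blast
qed

lemma Union_Delta_plus:
  "(\<Union>l\<in>Lambda N. Delta_plus ix N l)
    = {convex hull (cell_vertices l i) | l i. l \<in> Lambda N \<and> i \<in> {1..N} \<and> l i = l 1}"
proof -
  have "Delta_plus ix N l = {convex hull (cell_vertices l i) | i. i \<in> {1..N} \<and> l i = l 1}"
    if "l \<in> Lambda N" for l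
    unfolding Delta_plus_def
    by (rule Collect_cong) (metis (no_types, lifting) VV_Diff_vv[OF that] atLeastAtMost_iff)
  then show ?thesis by blast
qed

lemma convex_hull_S_C: "convex hull (S_C ix N) = P_C ix N"
proof -
  have one: "1 \<in> {1..N}" using N_ge by simp
  let ?D = "{e a - e b | a b. {a, b} \<in> cycle_edges N}"
  have "1 *\<^sub>R u 1 \<in> ?D" "(-1) *\<^sub>R u 1 \<in> ?D"
    unfolding edge_differences using one by blast+
  then have "(1/2) *\<^sub>R (1 *\<^sub>R u 1) + (1/2) *\<^sub>R ((-1) *\<^sub>R u 1) \<in> convex hull ?D"
    by (intro convexD[OF convex_convex_hull] hull_inc) auto
  then have "0 \<in> convex hull ?D" by (simp flip: scaleR_add_right)
  moreover have "S_C ix N = insert 0 ?D" by (simp add: S_C_def)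
  ultimately show ?thesis
    unfolding P_C_def by (simp add: hull_redundant)
qed

lemma measure_cell:
  assumes "l \<in> Lambda N" and "i \<in> {1..N}"
  shows "fact CARD('n) * measure lebesgue (convex hull (cell_vertices l i)) = 1"
proof -
  have "\<forall>w\<in>cell_rays l i. lattice_point w"
    using cell_vertices_subset[OF assms(1)] lattice_point_S_C by (auto simp: cell_vertices_def)
  then show ?thesis
    unfolding cell_vertices_def using card_cell_rays[OF assms] card_n
    by (intro measure_unimodular_simplex integral_dual_basis_cell[OF assms]) simp_all
qed

lemma cells_Int_face_of:
  assumes "l1 \<in> Lambda N" "i1 \<in> {1..N}" "l1 i1 = l1 1"
    and "l2 \<in> Lambda N" "i2 \<in> {1..N}" "l2 i2 = l2 1"
  shows "(convex hull (cell_vertices l1 i1) \<inter> convex hull (cell_vertices l2 i2))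
    face_of convex hull (cell_vertices l1 i1)"
proof -
  obtain c1 where below1: "\<forall>p\<in>S_C ix N. 0 + c1 \<bullet> p \<le> omega ix N p"
    and contact1: "contact (S_C ix N) (omega ix N) 0 c1 = cell_vertices l1 i1"
    by (rule exists_supporting_functional[OF assms(1-3)])
  obtain c2 where below2: "\<forall>p\<in>S_C ix N. 0 + c2 \<bullet> p \<le> omega ix N p"
    and contact2: "contact (S_C ix N) (omega ix N) 0 c2 = cell_vertices l2 i2"
    by (rule exists_supporting_functional[OF assms(4-6)])
  have "convex hull (cell_vertices l1 i1) \<inter> convex hull (cell_vertices l2 i2)
      = convex hull (cell_vertices l1 i1 \<inter> cell_vertices l2 i2)"
    using convex_hull_contact_Int[OF finite_S_C below1 below2] by (simp add: contact1 contact2)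
  then show ?thesis
    unfolding face_of_convex_hull_affine_independent[OF affine_independent_cell_vertices[OF assms(1,2)]]
    by (intro exI[of _ "cell_vertices l1 i1 \<inter> cell_vertices l2 i2"]) auto
qed

lemma unimodular_triangulation:
  "unimodular_triangulation_of (S_C ix N) (regular_subdivision (S_C ix N) (omega ix N))"
  unfolding unimodular_triangulation_of_def
proof (intro conjI ballI)
  show "finite (regular_subdivision (S_C ix N) (omega ix N))"
    by (rule finite_regular_subdivision[OF finite_S_C])
  show "\<Union>(regular_subdivision (S_C ix N) (omega ix N)) = convex hull (S_C ix N)"
    by (rule Union_regular_subdivision[OF finite_S_C aff_dim_lifted])
next
  fix C assume "C \<in> regular_subdivision (S_C ix N) (omega ix N)"
  then obtain l i where l: "l \<in> Lambda N" and i: "i \<in> {1..N}"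
    and C: "C = convex hull (cell_vertices l i)"
    unfolding regular_subdivision_eq by blast
  show "\<exists>V. V \<subseteq> S_C ix N \<and> \<not> affine_dependent V \<and> card V = CARD('n) + 1 \<and>
      C = convex hull V \<and> (\<forall>v\<in>V. lattice_point v) \<and> fact CARD('n) * measure lebesgue C = 1"
  proof (intro exI[of _ "cell_vertices l i"] conjI)
    show "cell_vertices l i \<subseteq> S_C ix N" by (rule cell_vertices_subset[OF l])
    show "\<not> affine_dependent (cell_vertices l i)" by (rule affine_independent_cell_vertices[OF l i])
    show "card (cell_vertices l i) = CARD('n) + 1"
      using card_cell_vertices[OF l i] card_n N_eq by simp
    show "\<forall>v\<in>cell_vertices l i. lattice_point v"
      using cell_vertices_subset[OF l] lattice_point_S_C by blast
    show "fact CARD('n) * measure lebesgue C = 1"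
      unfolding C by (rule measure_cell[OF l i])
  qed (rule C)
next
  fix C1 C2
  assume "C1 \<in> regular_subdivision (S_C ix N) (omega ix N)"
    and "C2 \<in> regular_subdivision (S_C ix N) (omega ix N)"
  then obtain l1 i1 l2 i2 where
    cell1: "l1 \<in> Lambda N" "i1 \<in> {1..N}" "l1 i1 = l1 1" "C1 = convex hull (cell_vertices l1 i1)"
    and cell2: "l2 \<in> Lambda N" "i2 \<in> {1..N}" "l2 i2 = l2 1" "C2 = convex hull (cell_vertices l2 i2)"
    unfolding regular_subdivision_eq by blast
  show "(C1 \<inter> C2) face_of C1"
    using cells_Int_face_of[OF cell1(1-3) cell2(1-3)] cell1(4) cell2(4) by simp
  show "(C1 \<inter> C2) face_of C2"
    using cells_Int_face_of[OF cell2(1-3) cell1(1-3)] cell1(4) cell2(4) by (simp add: Int_commute)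
qed

end

theorem theorem5p5:
  fixes N n :: nat and ix :: "nat \<Rightarrow> 'n::finite"
  assumes "N = n + 1" and "N \<ge> 4" and "even N"
    and "CARD('n) = n" and "bij_betw ix {1..n} (UNIV :: 'n set)"
  shows "convex hull (S_C ix N) = P_C ix N
    \<and> unimodular_triangulation_of (S_C ix N) (regular_subdivision (S_C ix N) (omega ix N))
    \<and> regular_subdivision (S_C ix N) (omega ix N) = (\<Union>l\<in>Lambda N. Delta_plus ix N l)"
proof -
  interpret cycle_adjacency N n ix
    using assms by unfold_locales
  show ?thesis
    using convex_hull_S_C unimodular_triangulation regular_subdivision_eq Union_Delta_plus by simp
qed

end
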